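(* Let $M^3$ be a real hypersurface in $\mathbb{C}P^2$ or $\mathbb{C}H^2$ and $p$ a point where $AW\neq\alpha W$. Write $AW=\alpha W+\beta X$ with $\beta>0$ and $X\in W^\perp$ a unit vector, let $Y=\varphi X$, and let $\lambda=\langle AX,X\rangle$, $\mu=\langle AX,Y\rangle$, $\nu=\langle AY,Y\rangle$, so that with respect to the orthonormal frame $(W,X,Y)$, $$A=\begin{pmatrix}\alpha&\beta&0\\ \beta&\lambda&\mu\\ 0&\mu&\nu\end{pmatrix}.$$ Then $(R(X,Y)\cdot S)X$ and $(R(X,Y)\cdot S)Y$ are multiples of $W$ at $p$ if and only if $$\mu\big(\beta^2\nu-\alpha(4c+\lambda\nu-\mu^2)\big)=0\quad\text{and}\quad \beta^2(\mu^2-\nu^2)=(4c+\lambda\nu-\mu^2)\big(\alpha(\lambda-\nu)-\beta^2\big).$$ The same equivalence holds at a point where $AW=\alpha W$, where $X$ is taken to be any unit principal vector in $W^\perp$, $Y=\varphi X$, $\lambda=\langle AX,X\rangle$, $\nu=\langle AY,Y\rangle$, and $\beta=\mu=0$.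
   Context: $\mathbb{C}P^2$, $\mathbb{C}H^2$ carry Kähler metrics $\langle\cdot,\cdot\rangle$ of constant holomorphic sectional curvature $4c\ne0$, complex structure $J$, connection $\widetilde\nabla$. For a real hypersurface $M$ with unit normal $\xi$: structure vector $W$ with $JW=\xi$; $W^\perp$ the holomorphic distribution; $\varphi X=JX-\langle X,W\rangle\xi$; shape operator $AX=-\widetilde\nabla_X\xi$; $\alpha=\langle AW,W\rangle$; $R$ the curvature tensor of $M$ ($R(X,Y)=\nabla_X\nabla_Y-\nabla_Y\nabla_X-\nabla_{[X,Y]}$); $S$ the Ricci tensor (type (1,1)), $\langle SX,Y\rangle=\operatorname{trace}\{Z\mapsto R(Z,X)Y\}$. For tangent $X,Y$, $R(X,Y)\cdot S=R(X,Y)\circ S-S\circ R(X,Y)$. *)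

theory Defs
  imports "HOL-Analysis.Analysis"
begin

text \<open>Pointwise model: the tangent space T_pM of the real hypersurface M^3 at p is
  modelled as real^3 with its Euclidean inner product. W is the structure vector,
  phi the induced structure tensor, A the shape operator, c the constant with
  holomorphic sectional curvature 4c of the ambient CP^2 (c>0) or CH^2 (c<0).\<close>

type_synonym tvec = "real ^ 3"

text \<open>Almost contact metric structure induced on T_pM by J and the unit normal xi.\<close>
definition structure_at :: "tvec \<Rightarrow> (tvec \<Rightarrow> tvec) \<Rightarrow> bool" where
  "structure_at W \<phi> \<longleftrightarrow> norm W = 1 \<and> linear \<phi> \<and> \<phi> W = 0 \<and>
     (\<forall>v. \<phi> (\<phi> v) = - v + (v \<bullet> W) *\<^sub>R W) \<and>
     (\<forall>u v. \<phi> u \<bullet> v = - (u \<bullet> \<phi> v))"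

text \<open>Curvature tensor of M at p, given by the Gauss equation for a hypersurface in a
  complex space form of constant holomorphic sectional curvature 4c.\<close>
definition curvR :: "real \<Rightarrow> (tvec \<Rightarrow> tvec) \<Rightarrow> (tvec \<Rightarrow> tvec) \<Rightarrow> tvec \<Rightarrow> tvec \<Rightarrow> tvec \<Rightarrow> tvec" where
  "curvR c \<phi> A X Y Z =
     c *\<^sub>R ((Y \<bullet> Z) *\<^sub>R X - (X \<bullet> Z) *\<^sub>R Y + (\<phi> Y \<bullet> Z) *\<^sub>R \<phi> X
            - (\<phi> X \<bullet> Z) *\<^sub>R \<phi> Y - (2 * (\<phi> X \<bullet> Y)) *\<^sub>R \<phi> Z)
     + (A Y \<bullet> Z) *\<^sub>R A X - (A X \<bullet> Z) *\<^sub>R A Y"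

text \<open>Ricci tensor (type (1,1)): <S X, V> = trace (Z \<mapsto> R(Z,X)V).\<close>
definition ricci :: "real \<Rightarrow> (tvec \<Rightarrow> tvec) \<Rightarrow> (tvec \<Rightarrow> tvec) \<Rightarrow> tvec \<Rightarrow> tvec" where
  "ricci c \<phi> A X = (\<Sum>v\<in>Basis. (\<Sum>b\<in>Basis. curvR c \<phi> A b X v \<bullet> b) *\<^sub>R v)"

definition RdotS :: "real \<Rightarrow> (tvec \<Rightarrow> tvec) \<Rightarrow> (tvec \<Rightarrow> tvec) \<Rightarrow> tvec \<Rightarrow> tvec \<Rightarrow> tvec \<Rightarrow> tvec" where
  "RdotS c \<phi> A X Y Z = curvR c \<phi> A X Y (ricci c \<phi> A Z) - ricci c \<phi> A (curvR c \<phi> A X Y Z)"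

definition multiple_of :: "tvec \<Rightarrow> tvec \<Rightarrow> bool" where
  "multiple_of v W \<longleftrightarrow> (\<exists>t::real. v = t *\<^sub>R W)"

end

theory Submission
  imports Defs
begin

(* In the orthonormal frame (W, X, Y = \<phi> X) the Gauss equation makes R(X,Y) a skew-symmetric
   operator with R(X,Y)X = \<beta>\<mu> W - \<kappa> Y and R(X,Y)Y = \<beta>\<nu> W + \<kappa> X, where
   \<kappa> = 4c + \<lambda>\<nu> - \<mu>^2 is the sectional curvature of span{X, Y}; the Ricci operator
   S = 5c - 3c <_, W> W + (tr A) A - A^2 is symmetric. Hence
   <(R(X,Y).S) Z, V> = - <S Z, R(X,Y) V> - <R(X,Y) Z, S V>, and reading off the entries of S in the
   frame, the X- and Y-components of (R(X,Y).S) X and (R(X,Y).S) Y are, up to sign,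
   2\<mu>(\<beta>^2 \<nu> - \<alpha>\<kappa>) and \<beta>^2 (\<mu>^2 - \<nu>^2) - \<kappa>(\<alpha>(\<lambda> - \<nu>) - \<beta>^2).
   The computation is purely algebraic. *)

lemma orthonormal_frame_expansion:
  fixes W X Y v :: "'a::euclidean_space"
  assumes "DIM('a) = 3"
    and "W \<bullet> W = 1" "X \<bullet> X = 1" "Y \<bullet> Y = 1" "W \<bullet> X = 0" "W \<bullet> Y = 0" "X \<bullet> Y = 0"
  shows "v = (v \<bullet> W) *\<^sub>R W + (v \<bullet> X) *\<^sub>R X + (v \<bullet> Y) *\<^sub>R Y"
proof (rule ccontr)
  define r where "r = v - ((v \<bullet> W) *\<^sub>R W + (v \<bullet> X) *\<^sub>R X + (v \<bullet> Y) *\<^sub>R Y)"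
  assume "\<not> ?thesis"
  then have "r \<noteq> 0" unfolding r_def right_minus_eq .
  have "X \<bullet> W = 0" "Y \<bullet> W = 0" "Y \<bullet> X = 0" using assms by (simp_all add: inner_commute)
  then have r_orth: "r \<bullet> W = 0" "r \<bullet> X = 0" "r \<bullet> Y = 0"
    using assms unfolding r_def by (simp_all add: inner_diff_left inner_add_left)
  have "pairwise orthogonal {W, X, Y, r}"
    using assms r_orth by (auto simp: pairwise_insert orthogonal_def inner_commute)
  moreover have "0 \<notin> {W, X, Y, r}" using assms \<open>r \<noteq> 0\<close> by auto
  ultimately have "independent {W, X, Y, r}" by (rule pairwise_orthogonal_independent)
  then have "card {W, X, Y, r} \<le> 3" using independent_bound assms(1) by metis
  moreover have "W \<noteq> X" "W \<noteq> Y" "X \<noteq> Y" "r \<noteq> W" "r \<noteq> X" "r \<noteq> Y"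
    using assms r_orth by (metis zero_neq_one)+
  then have "card {W, X, Y, r} = 4" by simp
  ultimately show False by simp
qed

lemma trace_eq_orthonormal_frame:
  fixes A :: "'a::euclidean_space \<Rightarrow> 'a" and W X Y :: 'a
  assumes "DIM('a) = 3" and "linear A"
    and "W \<bullet> W = 1" "X \<bullet> X = 1" "Y \<bullet> Y = 1" "W \<bullet> X = 0" "W \<bullet> Y = 0" "X \<bullet> Y = 0"
  shows "(\<Sum>b\<in>Basis. A b \<bullet> b) = A W \<bullet> W + A X \<bullet> X + A Y \<bullet> Y"
proof -
  note expansion = orthonormal_frame_expansion[OF assms(1,3-8)]
  have "A b \<bullet> b = (b \<bullet> W) * (A W \<bullet> b) + (b \<bullet> X) * (A X \<bullet> b) + (b \<bullet> Y) * (A Y \<bullet> b)" for b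
    using arg_cong[OF expansion[of b], of "\<lambda>u. A u \<bullet> b"] \<open>linear A\<close>
    by (simp add: linear_add linear_scale inner_add_left)
  then have "(\<Sum>b\<in>Basis. A b \<bullet> b) = (\<Sum>b\<in>Basis. (W \<bullet> b) * (A W \<bullet> b)) + (\<Sum>b\<in>Basis. (X \<bullet> b) * (A X \<bullet> b))
      + (\<Sum>b\<in>Basis. (Y \<bullet> b) * (A Y \<bullet> b))"
    by (simp add: sum.distrib inner_commute)
  also have "\<dots> = W \<bullet> A W + X \<bullet> A X + Y \<bullet> A Y" by (simp only: euclidean_inner[symmetric])
  finally show ?thesis by (simp add: inner_commute)
qed

lemma structure_at_skew:
  "structure_at W \<phi> \<Longrightarrow> \<phi> u \<bullet> v = - (u \<bullet> \<phi> v)"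
  unfolding structure_at_def by blast

lemma structure_at_phi_W: "structure_at W \<phi> \<Longrightarrow> \<phi> W = 0"
  unfolding structure_at_def by blast

lemma structure_at_orthogonal_self:
  assumes "structure_at W \<phi>" shows "v \<bullet> \<phi> v = 0"
  using structure_at_skew[OF assms, of v v] by (simp add: inner_commute)

lemma structure_at_W_orthogonal_phi:
  assumes "structure_at W \<phi>" shows "W \<bullet> \<phi> v = 0"
  using structure_at_skew[OF assms, of W v] structure_at_phi_W[OF assms] by simp

lemma curvR_skew:
  assumes skew: "\<And>u v. \<phi> u \<bullet> v = - (u \<bullet> \<phi> v)"
  shows "curvR c \<phi> A X Y Z \<bullet> V = - (Z \<bullet> curvR c \<phi> A X Y V)"
proof -
  have "Z \<bullet> X = X \<bullet> Z" "Z \<bullet> Y = Y \<bullet> Z" "Z \<bullet> \<phi> X = \<phi> X \<bullet> Z" "Z \<bullet> \<phi> Y = \<phi> Y \<bullet> Z"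
    "Z \<bullet> A X = A X \<bullet> Z" "Z \<bullet> A Y = A Y \<bullet> Z"
    by (simp_all add: inner_commute)
  then show ?thesis
    unfolding curvR_def
    by (simp add: skew[of Z V] inner_add_left inner_add_right inner_diff_left inner_diff_right algebra_simps)
qed

lemma ricci_eq:
  assumes "structure_at W \<phi>" and symmetric: "\<And>u v. A u \<bullet> v = u \<bullet> A v"
  shows "ricci c \<phi> A v = (5 * c) *\<^sub>R v - (3 * c * (v \<bullet> W)) *\<^sub>R W + (\<Sum>b\<in>Basis. A b \<bullet> b) *\<^sub>R A v - A (A v)"
proof -
  define h where "h = (\<Sum>b\<in>Basis. A b \<bullet> b)"
  have skew: "\<And>u w. \<phi> u \<bullet> w = - (u \<bullet> \<phi> w)" and phi_phi: "\<And>w. \<phi> (\<phi> w) = - w + (w \<bullet> W) *\<^sub>R W"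
    using assms(1) unfolding structure_at_def by auto
  have trace_curvR: "(\<Sum>b\<in>Basis. curvR c \<phi> A b v e \<bullet> b)
      = ((5 * c) *\<^sub>R v - (3 * c * (v \<bullet> W)) *\<^sub>R W + h *\<^sub>R A v - A (A v)) \<bullet> e" for e
  proof -
    have curvR_b: "curvR c \<phi> A b v e \<bullet> b = c * (v \<bullet> e) * (b \<bullet> b) - c * ((v \<bullet> b) * (e \<bullet> b))
        + 3 * c * ((\<phi> e \<bullet> b) * (\<phi> v \<bullet> b)) + (A v \<bullet> e) * (A b \<bullet> b) - (A v \<bullet> b) * (A e \<bullet> b)" for b
    proof -
      have "v \<bullet> \<phi> b = - (b \<bullet> \<phi> v)" "e \<bullet> \<phi> b = - (b \<bullet> \<phi> e)" "e \<bullet> A b = b \<bullet> A e"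
          "v \<bullet> A b = b \<bullet> A v" "v \<bullet> b = b \<bullet> v" "e \<bullet> b = b \<bullet> e"
        using skew symmetric by (metis inner_commute)+
      with structure_at_orthogonal_self[OF assms(1), of b] show ?thesis unfolding curvR_def
        by (simp add: inner_add_left inner_diff_left skew symmetric algebra_simps)
    qed
    have "(\<Sum>b\<in>Basis. curvR c \<phi> A b v e \<bullet> b) = c * (v \<bullet> e) * (\<Sum>b\<in>(Basis::tvec set). b \<bullet> b)
        - c * (\<Sum>b\<in>Basis. (v \<bullet> b) * (e \<bullet> b)) + 3 * c * (\<Sum>b\<in>Basis. (\<phi> e \<bullet> b) * (\<phi> v \<bullet> b))
        + (A v \<bullet> e) * h - (\<Sum>b\<in>Basis. (A v \<bullet> b) * (A e \<bullet> b))"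
      unfolding curvR_b h_def by (simp add: sum.distrib sum_subtractf sum_distrib_left)
    also have "\<dots> = c * (v \<bullet> e) * 3 - c * (v \<bullet> e) + 3 * c * (\<phi> e \<bullet> \<phi> v) + (A v \<bullet> e) * h - A v \<bullet> A e"
      by (simp add: euclidean_inner[symmetric])
    also have "\<dots> = ((5 * c) *\<^sub>R v - (3 * c * (v \<bullet> W)) *\<^sub>R W + h *\<^sub>R A v - A (A v)) \<bullet> e"
      by (simp add: skew phi_phi symmetric inner_add_left inner_diff_left inner_add_right inner_commute algebra_simps)
    finally show ?thesis .
  qed
  show ?thesis unfolding ricci_def trace_curvR h_def[symmetric] by (rule euclidean_representation)
qed

lemma ricci_inner:
  assumes "structure_at W \<phi>" and "\<And>u v. A u \<bullet> v = u \<bullet> A v"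
  shows "ricci c \<phi> A u \<bullet> v = 5 * c * (u \<bullet> v) - 3 * c * (u \<bullet> W) * (v \<bullet> W)
    + (\<Sum>b\<in>Basis. A b \<bullet> b) * (A u \<bullet> v) - A u \<bullet> A v"
  using assms(2)[of "A u" v] inner_commute[of W v]
  by (simp add: ricci_eq[OF assms] inner_diff_left inner_add_left)

lemma ricci_symmetric:
  assumes "structure_at W \<phi>" and "\<And>u v. A u \<bullet> v = u \<bullet> A v"
  shows "ricci c \<phi> A u \<bullet> v = u \<bullet> ricci c \<phi> A v"
proof -
  have "A u \<bullet> v = A v \<bullet> u" by (metis assms(2) inner_commute)
  then have "ricci c \<phi> A u \<bullet> v = ricci c \<phi> A v \<bullet> u"
    unfolding ricci_inner[OF assms] by (simp add: inner_commute)
  then show ?thesis by (simp add: inner_commute)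
qed

lemma RdotS_inner:
  assumes "structure_at W \<phi>" and "\<And>u v. A u \<bullet> v = u \<bullet> A v"
  shows "RdotS c \<phi> A X Y Z \<bullet> V
    = - (ricci c \<phi> A Z \<bullet> curvR c \<phi> A X Y V) - curvR c \<phi> A X Y Z \<bullet> ricci c \<phi> A V"
  unfolding RdotS_def inner_diff_left
  by (simp add: curvR_skew[OF structure_at_skew[OF assms(1)]] ricci_symmetric[OF assms])

(* AW has no \<phi> X-component, so it lies in span{W, X}; both cases of the theorem are of this kind. *)
locale adapted_frame =
  fixes c :: real and W :: tvec and \<phi> A :: "tvec \<Rightarrow> tvec" and X :: tvec
  assumes almost_contact: "structure_at W \<phi>"
    and shape_linear: "linear A"
    and shape_symmetric: "\<And>u v. A u \<bullet> v = u \<bullet> A v"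
    and X_unit: "norm X = 1"
    and X_orth_W: "X \<bullet> W = 0"
    and shape_W_orth_phi_X: "A W \<bullet> \<phi> X = 0"
begin

abbreviation Y :: tvec where "Y \<equiv> \<phi> X"

definition \<alpha> :: real where "\<alpha> = A W \<bullet> W"
definition \<beta> :: real where "\<beta> = A W \<bullet> X"
definition lam :: real where "lam = A X \<bullet> X"
definition mu :: real where "mu = A X \<bullet> Y"
definition nu :: real where "nu = A Y \<bullet> Y"
definition sectional :: real where "sectional = 4 * c + lam * nu - mu\<^sup>2"

lemmas frame_coefficient_defs = \<alpha>_def \<beta>_def lam_def mu_def nu_def sectional_def

lemma phi_Y: "\<phi> Y = - X"
  using almost_contact X_orth_W unfolding structure_at_def by auto

lemma frame_inner [simp]:
  "W \<bullet> W = 1" "X \<bullet> X = 1" "Y \<bullet> Y = 1"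
  "W \<bullet> X = 0" "X \<bullet> W = 0" "W \<bullet> Y = 0" "Y \<bullet> W = 0" "X \<bullet> Y = 0" "Y \<bullet> X = 0"
proof -
  show "W \<bullet> W = 1" using almost_contact unfolding structure_at_def by (simp add: norm_eq_1)
  show X: "X \<bullet> X = 1" using X_unit by (simp add: norm_eq_1)
  show "Y \<bullet> Y = 1" using structure_at_skew[OF almost_contact, of X Y] phi_Y X by simp
  show "X \<bullet> W = 0" by (fact X_orth_W)
  then show "W \<bullet> X = 0" by (simp add: inner_commute)
  show "W \<bullet> Y = 0" by (rule structure_at_W_orthogonal_phi[OF almost_contact])
  then show "Y \<bullet> W = 0" by (simp add: inner_commute)
  show "X \<bullet> Y = 0" by (rule structure_at_orthogonal_self[OF almost_contact])
  then show "Y \<bullet> X = 0" by (simp add: inner_commute)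
qed

lemma frame_expansion: "v = (v \<bullet> W) *\<^sub>R W + (v \<bullet> X) *\<^sub>R X + (v \<bullet> Y) *\<^sub>R Y"
  by (rule orthonormal_frame_expansion) simp_all

lemma frame_eqI:
  assumes "u \<bullet> W = v \<bullet> W" "u \<bullet> X = v \<bullet> X" "u \<bullet> Y = v \<bullet> Y"
  shows "u = v"
  using frame_expansion[of u] frame_expansion[of v] assms by simp

lemma shape_frame:
  "A W = \<alpha> *\<^sub>R W + \<beta> *\<^sub>R X"
  "A X = \<beta> *\<^sub>R W + lam *\<^sub>R X + mu *\<^sub>R Y"
  "A Y = mu *\<^sub>R X + nu *\<^sub>R Y"
proof -
  have "A X \<bullet> W = \<beta>" "A Y \<bullet> W = 0" "A Y \<bullet> X = mu"
    unfolding \<beta>_def mu_def using shape_symmetric shape_W_orth_phi_X by (metis inner_commute)+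
  then show "A W = \<alpha> *\<^sub>R W + \<beta> *\<^sub>R X" "A X = \<beta> *\<^sub>R W + lam *\<^sub>R X + mu *\<^sub>R Y"
    "A Y = mu *\<^sub>R X + nu *\<^sub>R Y"
    using frame_expansion[of "A W"] frame_expansion[of "A X"] frame_expansion[of "A Y"]
      shape_W_orth_phi_X
    unfolding \<alpha>_def \<beta>_def lam_def mu_def nu_def by simp_all
qed

lemma trace_shape: "(\<Sum>b\<in>Basis. A b \<bullet> b) = \<alpha> + lam + nu"
  using trace_eq_orthonormal_frame[OF _ shape_linear, of W X Y]
  unfolding \<alpha>_def lam_def nu_def by simp

lemma ricci_frame:
  "ricci c \<phi> A X \<bullet> W = \<beta> * nu"
  "ricci c \<phi> A X \<bullet> X = 5 * c + lam * (\<alpha> + nu) - \<beta>\<^sup>2 - mu\<^sup>2"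
  "ricci c \<phi> A X \<bullet> Y = \<alpha> * mu"
  "ricci c \<phi> A Y \<bullet> W = - \<beta> * mu"
  "ricci c \<phi> A Y \<bullet> X = \<alpha> * mu"
  "ricci c \<phi> A Y \<bullet> Y = 5 * c + nu * (\<alpha> + lam) - mu\<^sup>2"
  unfolding ricci_inner[OF almost_contact shape_symmetric] trace_shape shape_frame
  by (simp_all add: inner_add_left inner_add_right algebra_simps power2_eq_square)

lemma curvR_frame:
  "curvR c \<phi> A X Y X = (\<beta> * mu) *\<^sub>R W - sectional *\<^sub>R Y"
  "curvR c \<phi> A X Y Y = (\<beta> * nu) *\<^sub>R W + sectional *\<^sub>R X"
  by (rule frame_eqI; simp only: curvR_def inner_simps;
      simp add: shape_frame structure_at_phi_W[OF almost_contact] phi_Y inner_simps sectional_def algebra_simps power2_eq_square)+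

lemma RdotS_frame:
  "RdotS c \<phi> A X Y X \<bullet> X = -2 * (mu * (\<beta>\<^sup>2 * nu - \<alpha> * sectional))"
  "RdotS c \<phi> A X Y X \<bullet> Y = \<beta>\<^sup>2 * (mu\<^sup>2 - nu\<^sup>2) - sectional * (\<alpha> * (lam - nu) - \<beta>\<^sup>2)"
  "RdotS c \<phi> A X Y Y \<bullet> X = \<beta>\<^sup>2 * (mu\<^sup>2 - nu\<^sup>2) - sectional * (\<alpha> * (lam - nu) - \<beta>\<^sup>2)"
  "RdotS c \<phi> A X Y Y \<bullet> Y = 2 * (mu * (\<beta>\<^sup>2 * nu - \<alpha> * sectional))"
  unfolding RdotS_inner[OF almost_contact shape_symmetric] curvR_frame
  by (simp_all add: inner_add_left inner_add_right inner_diff_left inner_diff_right ricci_frame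
      inner_commute[of W] inner_commute[of X] inner_commute[of Y] algebra_simps power2_eq_square)

lemma multiple_of_W_iff: "multiple_of v W \<longleftrightarrow> v \<bullet> X = 0 \<and> v \<bullet> Y = 0"
proof
  assume "multiple_of v W"
  then show "v \<bullet> X = 0 \<and> v \<bullet> Y = 0" unfolding multiple_of_def by auto
next
  assume "v \<bullet> X = 0 \<and> v \<bullet> Y = 0"
  then have "v = (v \<bullet> W) *\<^sub>R W" using frame_expansion[of v] by simp
  then show "multiple_of v W" unfolding multiple_of_def by blast
qed

theorem RdotS_multiple_of_W_iff:
  "(multiple_of (RdotS c \<phi> A X Y X) W \<and> multiple_of (RdotS c \<phi> A X Y Y) W) \<longleftrightarrow>
   (mu * (\<beta>\<^sup>2 * nu - \<alpha> * sectional) = 0 \<and>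
    \<beta>\<^sup>2 * (mu\<^sup>2 - nu\<^sup>2) = sectional * (\<alpha> * (lam - nu) - \<beta>\<^sup>2))"
  unfolding multiple_of_W_iff RdotS_frame by auto

end

theorem proposition7:
  fixes c :: real and W :: tvec and \<phi> A :: "tvec \<Rightarrow> tvec"
  assumes "c \<noteq> 0"
    and "structure_at W \<phi>"
    and "linear A" and "\<forall>u v. A u \<bullet> v = u \<bullet> A v"
  shows
   "(\<forall>(\<beta>::real) X. A W \<noteq> (A W \<bullet> W) *\<^sub>R W \<longrightarrow> \<beta> > 0 \<longrightarrow> norm X = 1 \<longrightarrow> X \<bullet> W = 0 \<longrightarrow>
       A W = (A W \<bullet> W) *\<^sub>R W + \<beta> *\<^sub>R X \<longrightarrow>
       (let \<alpha> = A W \<bullet> W; Y = \<phi> X; lam = A X \<bullet> X; mu = A X \<bullet> Y; nu = A Y \<bullet> Y in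
         ((multiple_of (RdotS c \<phi> A X Y X) W \<and> multiple_of (RdotS c \<phi> A X Y Y) W) \<longleftrightarrow>
          (mu * (\<beta>\<^sup>2 * nu - \<alpha> * (4 * c + lam * nu - mu\<^sup>2)) = 0 \<and>
           \<beta>\<^sup>2 * (mu\<^sup>2 - nu\<^sup>2) = (4 * c + lam * nu - mu\<^sup>2) * (\<alpha> * (lam - nu) - \<beta>\<^sup>2)))))
    \<and>
    (\<forall>X (k::real). A W = (A W \<bullet> W) *\<^sub>R W \<longrightarrow> norm X = 1 \<longrightarrow> X \<bullet> W = 0 \<longrightarrow> A X = k *\<^sub>R X \<longrightarrow>
       (let \<alpha> = A W \<bullet> W; Y = \<phi> X; lam = A X \<bullet> X; nu = A Y \<bullet> Y; \<beta> = (0::real); mu = (0::real) in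
         ((multiple_of (RdotS c \<phi> A X Y X) W \<and> multiple_of (RdotS c \<phi> A X Y Y) W) \<longleftrightarrow>
          (mu * (\<beta>\<^sup>2 * nu - \<alpha> * (4 * c + lam * nu - mu\<^sup>2)) = 0 \<and>
           \<beta>\<^sup>2 * (mu\<^sup>2 - nu\<^sup>2) = (4 * c + lam * nu - mu\<^sup>2) * (\<alpha> * (lam - nu) - \<beta>\<^sup>2)))))"
proof -
  have frame: "adapted_frame W \<phi> A X" if "norm X = 1" "X \<bullet> W = 0" "A W \<bullet> \<phi> X = 0" for X
    using assms(2-4) that unfolding adapted_frame_def by blast
  note frame_criterion = adapted_frame.RdotS_multiple_of_W_iff[OF frame]
    adapted_frame.frame_coefficient_defs[OF frame]
  note phi_orth = structure_at_W_orthogonal_phi[OF assms(2)]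
    structure_at_orthogonal_self[OF assms(2)]
  show ?thesis
    unfolding Let_def
    apply (intro conjI allI impI)
    subgoal premises prems for \<beta> X
    proof -
      have "X \<bullet> X = 1" "X \<bullet> W = 0" using prems(3,4) by (simp_all add: norm_eq_1)
      then have "A W \<bullet> \<phi> X = 0" "A W \<bullet> X = \<beta>"
        by (subst prems(5); simp add: inner_add_left phi_orth inner_commute[of W X])+
      then show ?thesis using frame_criterion[OF prems(3,4)] by simp
    qed
    subgoal premises prems for X k
    proof -
      have "A W \<bullet> \<phi> X = 0" "A W \<bullet> X = 0"
        using prems(3) by (subst prems(1); simp add: phi_orth inner_commute[of W X])+
      moreover have "A X \<bullet> \<phi> X = 0" by (simp add: prems(4) phi_orth)
      ultimately show ?thesis using frame_criterion[OF prems(2,3)] by simp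
    qed
    done
qed

end
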